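(* Let $\mathbf{F}=(F_1,\ldots,F_d)$ be a vector of finite simple graphs, each with at most $n$ vertices, and let $e_i$ be the number of edges of $F_i$. Then the spine $\{ (p^{e_1}, p^{e_2}, \ldots, p^{e_d} ) \mid 0\leq p \leq 1 \}$ is contained in $P_{\mathbf{F};n}$ (with the convention $0^0=1$).
   Context: For graphs $F,G$, $t^L(F,G)$ is the number of subgraphs of $G$ (not necessarily induced) isomorphic to $F$, and $t(F,G)=t^L(F,G)/t^L(F,K_{|G|})$ if $|F|\le|G|$ and $t(F,G)=0$ otherwise, where $|H|$ is the number of vertices of $H$ and $K_N$ the complete graph on $N$ vertices. Write $t(\mathbf{F},G)=(t(F_1,G),\ldots,t(F_d,G))$. The polytope from subgraph statistics is $P_{\mathbf{F};n}=\mathrm{conv}\{t(\mathbf{F},G)\mid G \text{ a graph on } n \text{ vertices}\}\subseteq\mathbb{R}^d$. *)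

theory Defs
  imports "HOL-Analysis.Analysis"
begin

text \<open>A finite simple graph with vertex set {0..<k} is represented by the pair (k, E),
  where E is a set of 2-element subsets of {0..<k}.\<close>

type_synonym graph = "nat \<times> nat set set"

definition gverts :: "graph \<Rightarrow> nat" where "gverts G = fst G"
definition gedges :: "graph \<Rightarrow> nat set set" where "gedges G = snd G"

definition is_graph :: "graph \<Rightarrow> bool" where
  "is_graph G \<longleftrightarrow> (\<forall>e\<in>gedges G. card e = 2 \<and> e \<subseteq> {..<gverts G})"

definition complete_graph :: "nat \<Rightarrow> graph" where
  "complete_graph N = (N, {e. card e = 2 \<and> e \<subseteq> {..<N}})"

definition subgraphs :: "graph \<Rightarrow> (nat set \<times> nat set set) set" where
  "subgraphs G = {(V', E'). V' \<subseteq> {..<gverts G} \<and> E' \<subseteq> gedges G \<and> (\<forall>e\<in>E'. e \<subseteq> V')}"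

definition iso_to :: "graph \<Rightarrow> nat set \<times> nat set set \<Rightarrow> bool" where
  "iso_to F H \<longleftrightarrow> (\<exists>f. bij_betw f {..<gverts F} (fst H) \<and>
      (\<lambda>e. f ` e) ` gedges F = snd H)"

definition tL :: "graph \<Rightarrow> graph \<Rightarrow> nat" where
  "tL F G = card {H \<in> subgraphs G. iso_to F H}"

definition tdens :: "graph \<Rightarrow> graph \<Rightarrow> real" where
  "tdens F G = (if gverts F \<le> gverts G
      then real (tL F G) / real (tL F (complete_graph (gverts G))) else 0)"

definition subgraph_polytope :: "('d::finite \<Rightarrow> graph) \<Rightarrow> nat \<Rightarrow> (real ^ 'd) set" where
  "subgraph_polytope F n =
     convex hull {(\<chi> i. tdens (F i) G) | G. is_graph G \<and> gverts G = n}"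

end

theory Submission
  imports Defs
begin

text \<open>Average the density vector over the random graph G(n,p) on vertex set {0..<n}, in which
  every edge of K_n is kept independently with probability p. A fixed copy of F_i in K_n survives
  with probability p^{e_i}, and t(F_i,G) is the fraction of the copies in K_n that survive in G;
  hence the expected vector is (p^{e_1},...,p^{e_d}). This expectation is a convex combination of
  the points t(F,G), so it lies in the polytope.\<close>

definition bernoulli_weight :: "'a::comm_ring_1 \<Rightarrow> 'b set \<Rightarrow> 'b set \<Rightarrow> 'a" where
  "bernoulli_weight p U E = p ^ card E * (1 - p) ^ card (U - E)"

lemma bernoulli_weight_nonneg:
  fixes p :: real
  assumes "0 \<le> p" "p \<le> 1"
  shows "0 \<le> bernoulli_weight p U E"
  using assms by (simp add: bernoulli_weight_def)

text \<open>Expand the product over U of p + g e, where g e is 0 on S and 1 - p elsewhere.\<close>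
lemma sum_bernoulli_weight_supsets:
  assumes "finite U" "S \<subseteq> U"
  shows "(\<Sum>E\<in>Pow U. if S \<subseteq> E then bernoulli_weight p U E else 0) = p ^ card S"
proof -
  let ?g = "\<lambda>e. if e \<in> S then 0 else 1 - p"
  have term_eq: "(\<Prod>x\<in>E. p) * (\<Prod>x\<in>U - E. ?g x) =
      (if S \<subseteq> E then bernoulli_weight p U E else 0)" if "E \<in> Pow U" for E
  proof (cases "S \<subseteq> E")
    case True
    then have "(\<Prod>x\<in>U - E. ?g x) = (\<Prod>x\<in>U - E. 1 - p)"
      by (intro prod.cong) auto
    then show ?thesis using True by (simp add: bernoulli_weight_def)
  next
    case False
    then obtain s where "s \<in> S" "s \<notin> E" by auto
    then have "(\<Prod>x\<in>U - E. ?g x) = 0"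
      using assms by (intro prod_zero) auto
    then show ?thesis using False by simp
  qed
  have "p ^ card S = (\<Prod>e\<in>U \<inter> S. p)"
    using assms by (simp add: Int_absorb1)
  also have "\<dots> = (\<Prod>e\<in>U. if e \<in> S then p else 1)"
    using assms(1) by (simp add: prod.If_cases)
  also have "\<dots> = (\<Prod>e\<in>U. p + ?g e)"
    by (intro prod.cong) auto
  also have "\<dots> = (\<Sum>E\<in>Pow U. (\<Prod>x\<in>E. p) * (\<Prod>x\<in>U - E. ?g x))"
    by (rule prod_add[OF assms(1)])
  also have "\<dots> = (\<Sum>E\<in>Pow U. if S \<subseteq> E then bernoulli_weight p U E else 0)"
    by (intro sum.cong refl term_eq)
  finally show ?thesis by simp
qed

lemma sum_bernoulli_weight:
  assumes "finite U"
  shows "(\<Sum>E\<in>Pow U. bernoulli_weight p U E) = 1"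
  using sum_bernoulli_weight_supsets[OF assms, of "{}" p] by simp

lemma finite_subgraphs: "finite (subgraphs G)"
proof (rule finite_subset)
  show "subgraphs G \<subseteq> Pow {..<gverts G} \<times> Pow (Pow {..<gverts G})"
    unfolding subgraphs_def by auto
qed simp

lemma finite_complete_graph_edges: "finite (gedges (complete_graph n))"
  by (rule finite_subset[of _ "Pow {..<n}"]) (auto simp: complete_graph_def gedges_def)

lemma is_graph_edge_subset_complete:
  "E \<subseteq> gedges (complete_graph n) \<Longrightarrow> is_graph (n, E)"
  by (auto simp: is_graph_def complete_graph_def gedges_def gverts_def)

lemma card_edges_iso:
  assumes "is_graph F" "iso_to F H"
  shows "card (snd H) = card (gedges F)"
proof -
  from assms(2) obtain f where f: "bij_betw f {..<gverts F} (fst H)"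
    "(\<lambda>e. f ` e) ` gedges F = snd H" unfolding iso_to_def by auto
  have "inj_on (image f) (Pow {..<gverts F})"
    using f(1) by (intro inj_on_image_Pow) (simp add: bij_betw_def)
  moreover have "gedges F \<subseteq> Pow {..<gverts F}"
    using assms(1) unfolding is_graph_def by auto
  ultimately have "inj_on (image f) (gedges F)" by (rule inj_on_subset)
  then show ?thesis using f(2) card_image by metis
qed

lemma tL_complete_graph_pos:
  assumes "is_graph F" "gverts F \<le> n"
  shows "tL F (complete_graph n) > 0"
proof -
  have edges_F: "\<forall>e\<in>gedges F. card e = 2 \<and> e \<subseteq> {..<gverts F}"
    using assms(1) unfolding is_graph_def .
  have verts_F: "{..<gverts F} \<subseteq> {..<n}"
    using assms(2) by auto
  have "({..<gverts F}, gedges F) \<in> subgraphs (complete_graph n)"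
    using edges_F verts_F unfolding subgraphs_def complete_graph_def gedges_def gverts_def
    by fastforce
  moreover have "iso_to F ({..<gverts F}, gedges F)"
    unfolding iso_to_def by (auto intro!: exI[of _ id])
  ultimately have "{H \<in> subgraphs (complete_graph n). iso_to F H} \<noteq> {}" by blast
  then show ?thesis
    unfolding tL_def by (simp add: card_gt_0_iff finite_subgraphs)
qed

lemma tL_spanning_subgraph:
  assumes "E \<subseteq> gedges (complete_graph n)"
  shows "real (tL F (n, E)) =
    (\<Sum>H | H \<in> subgraphs (complete_graph n) \<and> iso_to F H. if snd H \<subseteq> E then 1 else 0)"
proof -
  let ?A = "{H \<in> subgraphs (complete_graph n). iso_to F H}"
  have "{H \<in> subgraphs (n, E). iso_to F H} = ?A \<inter> {H. snd H \<subseteq> E}"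
    using assms unfolding subgraphs_def complete_graph_def gedges_def gverts_def by auto
  moreover have "finite ?A" using finite_subgraphs by simp
  ultimately show ?thesis
    unfolding tL_def by (simp add: sum.If_cases)
qed

lemma expected_tdens_random_graph:
  assumes "is_graph F" "gverts F \<le> n"
  defines "U \<equiv> gedges (complete_graph n)"
  shows "(\<Sum>E\<in>Pow U. bernoulli_weight p U E * tdens F (n, E)) = p ^ card (gedges F)"
proof -
  define A where "A = {H \<in> subgraphs (complete_graph n). iso_to F H}"
  have finU: "finite U" unfolding U_def by (rule finite_complete_graph_edges)
  have edges_A: "snd H \<subseteq> U" "card (snd H) = card (gedges F)" if "H \<in> A" for H
  proof -
    from that have "H \<in> subgraphs (complete_graph n)" "iso_to F H" unfolding A_def by auto
    then show "snd H \<subseteq> U" "card (snd H) = card (gedges F)"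
      using card_edges_iso[OF assms(1)] unfolding U_def subgraphs_def by auto
  qed
  have tL_K: "tL F (complete_graph n) = card A" unfolding tL_def A_def ..
  have tdens_eq: "tdens F (n, E) = real (tL F (n, E)) / real (card A)" for E
    unfolding tdens_def using assms(2) tL_K by (simp add: gverts_def complete_graph_def)
  have "(\<Sum>E\<in>Pow U. bernoulli_weight p U E * real (tL F (n, E)))
      = (\<Sum>E\<in>Pow U. \<Sum>H\<in>A. if snd H \<subseteq> E then bernoulli_weight p U E else 0)"
  proof (rule sum.cong)
    fix E assume "E \<in> Pow U"
    then have "real (tL F (n, E)) = (\<Sum>H\<in>A. if snd H \<subseteq> E then 1 else 0)"
      unfolding A_def U_def by (simp add: tL_spanning_subgraph)
    then show "bernoulli_weight p U E * real (tL F (n, E))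
        = (\<Sum>H\<in>A. if snd H \<subseteq> E then bernoulli_weight p U E else 0)"
      by (simp add: sum_distrib_left if_distrib cong: if_cong)
  qed simp
  also have "\<dots> = (\<Sum>H\<in>A. \<Sum>E\<in>Pow U. if snd H \<subseteq> E then bernoulli_weight p U E else 0)"
    by (rule sum.swap)
  also have "\<dots> = (\<Sum>H\<in>A. p ^ card (gedges F))"
    by (intro sum.cong refl) (simp add: sum_bernoulli_weight_supsets[OF finU] edges_A)
  also have "\<dots> = real (card A) * p ^ card (gedges F)"
    by simp
  finally have "(\<Sum>E\<in>Pow U. bernoulli_weight p U E * real (tL F (n, E))) / real (card A)
      = p ^ card (gedges F)"
    using tL_complete_graph_pos[OF assms(1,2)] tL_K by simp
  then show ?thesis by (simp add: tdens_eq sum_divide_distrib)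
qed

theorem proposition3p1:
  fixes F :: "'d::finite \<Rightarrow> graph" and n :: nat and p :: real
  assumes "\<And>i. is_graph (F i)"
    and "\<And>i. gverts (F i) \<le> n"
    and "0 \<le> p" and "p \<le> 1"
  shows "(\<chi> i. p ^ card (gedges (F i))) \<in> subgraph_polytope F n"
proof -
  define U where "U = gedges (complete_graph n)"
  have finU: "finite U" unfolding U_def by (rule finite_complete_graph_edges)
  have expectation: "(\<chi> i. p ^ card (gedges (F i))) =
      (\<Sum>E\<in>Pow U. bernoulli_weight p U E *\<^sub>R (\<chi> i. tdens (F i) (n, E)))"
    unfolding vec_eq_iff U_def
    using expected_tdens_random_graph[OF assms(1,2)] by simp
  have points: "(\<chi> i. tdens (F i) (n, E)) \<in> subgraph_polytope F n" if "E \<in> Pow U" for E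
    unfolding subgraph_polytope_def
    using that is_graph_edge_subset_complete[of E n]
    by (intro hull_inc) (auto simp: U_def gverts_def)
  show ?thesis
    unfolding expectation
  proof (rule convex_sum)
    show "convex (subgraph_polytope F n)"
      unfolding subgraph_polytope_def by (rule convex_convex_hull)
    show "finite (Pow U)" using finU by simp
    show "sum (bernoulli_weight p U) (Pow U) = 1" by (rule sum_bernoulli_weight[OF finU])
    show "\<And>E. E \<in> Pow U \<Longrightarrow> 0 \<le> bernoulli_weight p U E"
      by (rule bernoulli_weight_nonneg[OF assms(3,4)])
  qed (rule points)
qed

end
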